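(* Let $f : \mathbb{Z}_{\geqslant 1} \to \mathbb{C}$ be an arithmetic function and for real $x \geqslant 1$ set $$S_{r}(x)=\sum_{n_{1}\leqslant x,\dots,n_{r}\leqslant x}\left( f ( n_1 ) + \dotsb + f ( n_r ) \right) \left \lfloor \frac{x}{n_1 \dotsb n_r}\right \rfloor .$$ Define recursively $$T_{1}(x)=\sum_{n \leqslant x} \left \lfloor \frac{x}{n} \right \rfloor (f \star \mathbf{1}) (n), \qquad T_{r}(x) = \sum_{n \leqslant x} T_{r-1} \left( \frac{x}{n} \right) \quad ( r \in \mathbb{Z}_{\geqslant 2} ).$$ Then for every $r \in \mathbb{Z}_{\geqslant 2}$ and every real $x \geqslant 1$, $S_{r}(x)=r\, T_{r-1}(x)$.
   Context: $\lfloor\cdot\rfloor$ is the integer part; sums run over positive integers. $\mathbf{1}$ is the constant function $1$, and $(F \star G)(n) := \sum_{d \mid n} F(d) G(n/d)$ is Dirichlet convolution. *)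

theory Defs
  imports "HOL-Analysis.Analysis"
begin

definition dconv :: "(nat \<Rightarrow> complex) \<Rightarrow> (nat \<Rightarrow> complex) \<Rightarrow> nat \<Rightarrow> complex" where
  "dconv F G n = (\<Sum>d | d dvd n. F d * G (n div d))"

definition one_fn :: "nat \<Rightarrow> complex" where
  "one_fn n = 1"

definition S :: "(nat \<Rightarrow> complex) \<Rightarrow> nat \<Rightarrow> real \<Rightarrow> complex" where
  "S f r x = (\<Sum>ns \<in> PiE {..<r} (\<lambda>_. {1..nat \<lfloor>x\<rfloor>}).
      (\<Sum>i<r. f (ns i)) * of_int \<lfloor>x / real (\<Prod>i<r. ns i)\<rfloor>)"

text \<open>T_r(x), defined for r \<ge> 1; the value at r = 0 is an irrelevant default.\<close>
fun T :: "(nat \<Rightarrow> complex) \<Rightarrow> nat \<Rightarrow> real \<Rightarrow> complex" where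
  "T f 0 x = 0"
| "T f (Suc 0) x = (\<Sum>n \<in> {1..nat \<lfloor>x\<rfloor>}. of_int \<lfloor>x / real n\<rfloor> * dconv f one_fn n)"
| "T f (Suc (Suc r)) x = (\<Sum>n \<in> {1..nat \<lfloor>x\<rfloor>}. T f (Suc r) (x / real n))"

end

theory Submission
  imports Defs
begin

text \<open>Since the weight \<open>\<lfloor>x / (n_1 \<cdots> n_r)\<rfloor>\<close> is symmetric in the \<open>n_i\<close>, each of the
  \<open>r\<close> summands \<open>f(n_i)\<close> contributes the same amount, so \<open>S_r(x) = r S'_r(x)\<close>, where in
  \<open>S'_r\<close> (\<open>S_head\<close>) only \<open>f(n_1)\<close> occurs. Fixing the last variable \<open>n_r = n\<close> gives
  \<open>S'_r(x) = \<Sum>_{n \<le> x} S'_{r-1}(x/n)\<close>, because tuples with a coordinate exceeding \<open>x/n\<close>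
  have weight \<open>0\<close>; and grouping the pairs in \<open>S'_2(x)\<close> by their product \<open>n_1 n_2\<close> yields
  \<open>T_1(x)\<close>. So \<open>S'_r\<close> satisfies the recursion defining \<open>T_{r-1}\<close>.\<close>

definition S_head :: "(nat \<Rightarrow> complex) \<Rightarrow> nat \<Rightarrow> real \<Rightarrow> complex" where
  "S_head f r x = (\<Sum>ns \<in> PiE {..<r} (\<lambda>_. {1..nat \<lfloor>x\<rfloor>}).
      f (ns 0) * of_int \<lfloor>x / real (\<Prod>i<r. ns i)\<rfloor>)"

lemma PiE_comp_permutes:
  assumes "\<sigma> permutes I" "ns \<in> PiE I (\<lambda>_. B)"
  shows "ns \<circ> \<sigma> \<in> PiE I (\<lambda>_. B)"
  using assms by (auto simp: PiE_iff extensional_def permutes_in_image permutes_not_in)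

lemma sum_PiE_comp_permutes:
  assumes "\<sigma> permutes I"
  shows "(\<Sum>ns\<in>PiE I (\<lambda>_. B). h (ns \<circ> \<sigma>)) = (\<Sum>ns\<in>PiE I (\<lambda>_. B). h ns)"
proof (rule sum.reindex_bij_witness[where i="\<lambda>ns. ns \<circ> inv \<sigma>" and j="\<lambda>ns. ns \<circ> \<sigma>"])
  have inv: "inv \<sigma> permutes I"
    using assms by (rule permutes_inv)
  show "ns \<circ> \<sigma> \<circ> inv \<sigma> = ns" "ns \<circ> inv \<sigma> \<circ> \<sigma> = ns" for ns
    using permutes_inv_o[OF assms] by (simp_all add: comp_assoc)
  show "ns \<circ> \<sigma> \<in> PiE I (\<lambda>_. B)" if "ns \<in> PiE I (\<lambda>_. B)" for ns
    using assms that by (rule PiE_comp_permutes)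
  show "ns \<circ> inv \<sigma> \<in> PiE I (\<lambda>_. B)" if "ns \<in> PiE I (\<lambda>_. B)" for ns
    using inv that by (rule PiE_comp_permutes)
qed simp

lemma S_eq_of_nat_mult_S_head: "S f r x = of_nat r * S_head f r x"
proof -
  define B where "B = {1..nat \<lfloor>x\<rfloor>}"
  define F where "F ns = (of_int \<lfloor>x / real (\<Prod>i<r. ns i)\<rfloor> :: complex)" for ns :: "nat \<Rightarrow> nat"
  have "S f r x = (\<Sum>i<r. \<Sum>ns\<in>PiE {..<r} (\<lambda>_. B). f (ns i) * F ns)"
    unfolding S_def B_def F_def by (simp add: sum_distrib_right sum.swap[of _ "{..<r}"])
  also have "\<dots> = (\<Sum>i<r. S_head f r x)"
  proof (rule sum.cong[OF refl])
    fix i assume "i \<in> {..<r}"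
    then have swap: "Transposition.transpose 0 i permutes {..<r}"
      by (intro permutes_swap_id) auto
    have "F (ns \<circ> Transposition.transpose 0 i) = F ns" for ns
      using prod.permute[OF swap, of ns] by (simp add: F_def)
    then show "(\<Sum>ns\<in>PiE {..<r} (\<lambda>_. B). f (ns i) * F ns) = S_head f r x"
      using sum_PiE_comp_permutes[OF swap, of "\<lambda>ns. f (ns 0) * F ns" B]
      by (simp add: S_head_def B_def F_def)
  qed
  finally show ?thesis
    by simp
qed

lemma floor_divide_of_nat_eq_0:
  assumes "0 \<le> y" "nat \<lfloor>y\<rfloor> < n"
  shows "\<lfloor>y / real n\<rfloor> = 0"
proof -
  have "y < real n"
    using assms by linarith
  with assms(1) show ?thesis
    by (simp add: floor_eq_iff)
qed

lemma sum_PiE_floor_divide_prod_extend: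
  fixes g :: "(nat \<Rightarrow> nat) \<Rightarrow> 'a::ring_1"
  assumes "0 \<le> y" "nat \<lfloor>y\<rfloor> \<le> M"
  shows "(\<Sum>ns \<in> PiE {..<m} (\<lambda>_. {1..nat \<lfloor>y\<rfloor>}). g ns * of_int \<lfloor>y / real (\<Prod>i<m. ns i)\<rfloor>)
       = (\<Sum>ns \<in> PiE {..<m} (\<lambda>_. {1..M}). g ns * of_int \<lfloor>y / real (\<Prod>i<m. ns i)\<rfloor>)"
proof (rule sum.mono_neutral_left)
  show "PiE {..<m} (\<lambda>_. {1..nat \<lfloor>y\<rfloor>}) \<subseteq> PiE {..<m} (\<lambda>_. {1..M})"
    using assms(2) by (intro PiE_mono) auto
  show "\<forall>ns \<in> PiE {..<m} (\<lambda>_. {1..M}) - PiE {..<m} (\<lambda>_. {1..nat \<lfloor>y\<rfloor>}).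
          g ns * of_int \<lfloor>y / real (\<Prod>i<m. ns i)\<rfloor> = 0"
  proof
    fix ns assume ns: "ns \<in> PiE {..<m} (\<lambda>_. {1..M}) - PiE {..<m} (\<lambda>_. {1..nat \<lfloor>y\<rfloor>})"
    then obtain j where "j < m" "nat \<lfloor>y\<rfloor> < ns j"
      by (auto simp: PiE_iff)
    moreover have "ns j \<le> (\<Prod>i<m. ns i)"
      using ns \<open>j < m\<close>
      by (intro dvd_imp_le dvd_prodI) (auto simp: PiE_iff Suc_le_eq intro!: prod_pos)
    ultimately show "g ns * of_int \<lfloor>y / real (\<Prod>i<m. ns i)\<rfloor> = 0"
      using floor_divide_of_nat_eq_0[OF assms(1), of "\<Prod>i<m. ns i"] by simp
  qed
qed (simp add: finite_PiE)

lemma sum_PiE_lessThan_Suc: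
  "(\<Sum>ns \<in> PiE {..<Suc m} (\<lambda>_. A). h ns)
     = (\<Sum>(a, ns) \<in> A \<times> PiE {..<m} (\<lambda>_. A). h (ns(m := a)))"
proof -
  have "PiE {..<Suc m} (\<lambda>_. A) = (\<lambda>(a, ns). ns(m := a)) ` (A \<times> PiE {..<m} (\<lambda>_. A))"
    using PiE_insert_eq[of m "{..<m}" "\<lambda>_. A"] by (simp add: lessThan_Suc)
  moreover have "inj_on (\<lambda>(a, ns). ns(m := a)) (A \<times> PiE {..<m} (\<lambda>_. A))"
    using inj_combinator[of m "{..<m}" "\<lambda>_. A"] by simp
  ultimately show ?thesis
    by (simp add: sum.reindex case_prod_unfold comp_def)
qed

lemma S_head_Suc:
  assumes "0 \<le> y" "m \<noteq> 0"
  shows "S_head f (Suc m) y = (\<Sum>n\<in>{1..nat \<lfloor>y\<rfloor>}. S_head f m (y / real n))"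
proof -
  define A where "A = {1..nat \<lfloor>y\<rfloor>}"
  have "S_head f (Suc m) y = (\<Sum>(a, ns) \<in> A \<times> PiE {..<m} (\<lambda>_. A).
      f (ns 0) * of_int \<lfloor>(y / real a) / real (\<Prod>i<m. ns i)\<rfloor>)"
    using assms(2) unfolding S_head_def A_def sum_PiE_lessThan_Suc
    by (intro sum.cong) (auto simp: prod.lessThan_Suc mult.commute)
  also have "\<dots> = (\<Sum>a\<in>A. \<Sum>ns\<in>PiE {..<m} (\<lambda>_. A).
      f (ns 0) * of_int \<lfloor>(y / real a) / real (\<Prod>i<m. ns i)\<rfloor>)"
    by (rule sum.cartesian_product[symmetric])
  also have "\<dots> = (\<Sum>a\<in>A. S_head f m (y / real a))"
  proof (rule sum.cong[OF refl])
    fix a assume "a \<in> A"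
    then have "y / real a \<le> y"
      using assms(1) by (auto simp: A_def divide_simps mult_le_cancel_left1)
    then have "nat \<lfloor>y / real a\<rfloor> \<le> nat \<lfloor>y\<rfloor>"
      by (simp add: floor_mono nat_mono)
    then show "(\<Sum>ns\<in>PiE {..<m} (\<lambda>_. A). f (ns 0) * of_int \<lfloor>(y / real a) / real (\<Prod>i<m. ns i)\<rfloor>)
        = S_head f m (y / real a)"
      unfolding S_head_def A_def using assms(1)
      by (intro sum_PiE_floor_divide_prod_extend[symmetric]) auto
  qed
  finally show ?thesis
    by (simp add: A_def)
qed

lemma sum_divisors_eq_sum_mult_pairs:
  fixes N :: nat
  shows "(\<Sum>n\<in>{1..N}. \<Sum>d | d dvd n. h d n)
       = (\<Sum>(a, b) \<in> {(a, b). a * b \<in> {1..N}}. h b (a * b))"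
proof -
  have "(\<Sum>n\<in>{1..N}. \<Sum>d | d dvd n. h d n)
      = (\<Sum>(n, d) \<in> Sigma {1..N} (\<lambda>n. {d. d dvd n}). h d n)"
    by (intro sum.Sigma) (auto intro: finite_divisors_nat)
  also have "\<dots> = (\<Sum>(a, b) \<in> {(a, b). a * b \<in> {1..N}}. h b (a * b))"
    by (rule sum.reindex_bij_witness[where i="\<lambda>(a, b). (a * b, b)" and j="\<lambda>(n, d). (n div d, d)"])
      (auto simp: dvd_div_mult_self)
  finally show ?thesis .
qed

lemma T_1_eq_S_head_2:
  assumes "0 \<le> y"
  shows "T f 1 y = S_head f 2 y"
proof -
  define N where "N = nat \<lfloor>y\<rfloor>"
  have "T f 1 y = (\<Sum>n\<in>{1..N}. \<Sum>d | d dvd n. f d * of_int \<lfloor>y / real n\<rfloor>)"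
    by (simp add: N_def dconv_def one_fn_def sum_distrib_left mult.commute)
  also have "\<dots> = (\<Sum>(a, b) \<in> {(a, b). a * b \<in> {1..N}}. f b * of_int \<lfloor>y / real (a * b)\<rfloor>)"
    by (rule sum_divisors_eq_sum_mult_pairs)
  also have "\<dots> = (\<Sum>(a, b) \<in> {1..N} \<times> {1..N}. f b * of_int \<lfloor>y / real (a * b)\<rfloor>)"
  proof (rule sum.mono_neutral_left)
    show "{(a, b). a * b \<in> {1..N}} \<subseteq> {1..N} \<times> {1..N}"
      by (auto simp: Suc_le_eq)
        (metis dvd_imp_le dvd_triv_left dvd_triv_right le_trans nat_0_less_mult_iff)+
    have "\<lfloor>y / real (a * b)\<rfloor> = 0" if "N < a * b" for a b
      using assms that unfolding N_def by (rule floor_divide_of_nat_eq_0)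
    then show "\<forall>p \<in> {1..N} \<times> {1..N} - {(a, b). a * b \<in> {1..N}}.
        (case p of (a, b) \<Rightarrow> f b * of_int \<lfloor>y / real (a * b)\<rfloor>) = 0"
      by (auto simp del: of_nat_mult) (meson leI)
  qed simp
  also have "\<dots> = (\<Sum>a\<in>{1..N}. \<Sum>b\<in>{1..N}. f b * of_int \<lfloor>y / real (a * b)\<rfloor>)"
    by (rule sum.cartesian_product[symmetric])
  also have "\<dots> = S_head f 2 y"
    unfolding S_head_def numeral_2_eq_2
    by (simp add: N_def sum_PiE_lessThan_Suc sum.cartesian_product[symmetric] mult.commute)
  finally show ?thesis .
qed

lemma T_Suc_eq_S_head:
  assumes "0 \<le> y"
  shows "T f (Suc k) y = S_head f (Suc (Suc k)) y"
  using assms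
proof (induction k arbitrary: y)
  case 0
  then show ?case
    using T_1_eq_S_head_2 by (simp add: numeral_2_eq_2)
next
  case (Suc k)
  then show ?case
    by (simp add: S_head_Suc)
qed

theorem theorem5p1:
  fixes f :: "nat \<Rightarrow> complex" and r :: nat and x :: real
  assumes "r \<ge> 2" and "x \<ge> 1"
  shows "S f r x = of_nat r * T f (r - 1) x"
proof -
  obtain k where "r = Suc (Suc k)"
    using assms(1) by (metis add_2_eq_Suc le_Suc_ex)
  then show ?thesis
    using S_eq_of_nat_mult_S_head T_Suc_eq_S_head assms(2) by simp
qed

end
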